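(* For all $t\ge0$ and $\tau>0$, the function $u\mapsto\Xi(u,t,\tau)$ is convex and essentially smooth on $\mathcal{K}_{t,\tau}$.
   Context: Parameters $v,\xi>0$, $\rho\in(-1,1)$, $\bar\rho:=\sqrt{1-\rho^2}$. $\Xi(u,t,\tau):=\frac{uv}{\xi(\bar\rho\cot(\frac12\xi\bar\rho\tau u)-\rho)-\frac12\xi^2tu}$ with $\Xi(0,t,\tau):=0$; $\mathcal{K}_{t,\tau}$ is the connected component containing $0$ of $\{u\in\mathbb{R}:\Xi(u,0,\tau)<\frac{2v}{\xi^2t}\}$ ($2v/(\xi^2t):=+\infty$ if $t=0$). A convex function $h$ on an interval is essentially smooth if its interior is nonempty, $h$ is differentiable there, and $|h'(u_n)|\to\infty$ for every sequence $u_n$ in the interior converging to a boundary point. *)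

theory Defs
  imports "HOL-Analysis.Analysis"
begin

definition rhobar :: "real \<Rightarrow> real" where
  "rhobar \<rho> = sqrt (1 - \<rho>^2)"

definition Xi_den :: "real \<Rightarrow> real \<Rightarrow> real \<Rightarrow> real \<Rightarrow> real \<Rightarrow> real" where
  "Xi_den \<xi> \<rho> u t \<tau> =
     \<xi> * (rhobar \<rho> * cot (\<xi> * rhobar \<rho> * \<tau> * u / 2) - \<rho>) - \<xi>^2 * t * u / 2"

definition Xi :: "real \<Rightarrow> real \<Rightarrow> real \<Rightarrow> real \<Rightarrow> real \<Rightarrow> real \<Rightarrow> real" where
  "Xi v \<xi> \<rho> u t \<tau> = (if u = 0 then 0 else u * v / Xi_den \<xi> \<rho> u t \<tau>)"

definition Xi_defined :: "real \<Rightarrow> real \<Rightarrow> real \<Rightarrow> real \<Rightarrow> real \<Rightarrow> bool" where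
  "Xi_defined \<xi> \<rho> u t \<tau> \<longleftrightarrow>
     u = 0 \<or> (sin (\<xi> * rhobar \<rho> * \<tau> * u / 2) \<noteq> 0 \<and> Xi_den \<xi> \<rho> u t \<tau> \<noteq> 0)"

text \<open>K_{t,tau}: connected component containing 0 of {u. Xi(u,0,tau) < 2v/(xi^2 t)},
  where the threshold is +infinity for t = 0 (so the condition is just that Xi(u,0,tau) is finite).\<close>
definition K_set :: "real \<Rightarrow> real \<Rightarrow> real \<Rightarrow> real \<Rightarrow> real \<Rightarrow> real set" where
  "K_set v \<xi> \<rho> t \<tau> = connected_component_set
     {u. Xi_defined \<xi> \<rho> u 0 \<tau> \<and> (t = 0 \<or> Xi v \<xi> \<rho> u 0 \<tau> < 2 * v / (\<xi>^2 * t))} 0"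

definition essentially_smooth_on :: "real set \<Rightarrow> (real \<Rightarrow> real) \<Rightarrow> bool" where
  "essentially_smooth_on K h \<longleftrightarrow>
     interior K \<noteq> {} \<and>
     (\<forall>u\<in>interior K. h differentiable (at u)) \<and>
     (\<forall>x b. (\<forall>n. x n \<in> interior K) \<longrightarrow> x \<longlonglongrightarrow> b \<longrightarrow> b \<in> frontier K \<longrightarrow>
        filterlim (\<lambda>n. \<bar>deriv h (x n)\<bar>) at_top sequentially)"

end

theory Submission
  imports Defs
begin

text \<open>Write \<open>\<rho> = sin \<phi>\<close>, so that \<open>rhobar \<rho> = cos \<phi>\<close> and, with \<open>\<omega> = \<xi> rhobar \<rho> \<tau> / 2\<close>
  and \<open>\<kappa> = \<xi>\<^sup>2 t / 2\<close>, \<open>\<Xi>(u,t,\<tau>) = v u sin(\<omega> u) / (\<xi> cos(\<omega> u + \<phi>) - \<kappa> u sin(\<omega> u))\<close>.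
  Hence \<open>\<Xi> = M \<circ> W\<close> with \<open>W u = u sin(\<omega> u) / cos(\<omega> u + \<phi>) = cos \<phi> u tan(\<omega> u + \<phi>) - sin \<phi> u\<close>,
  convex on the strip \<open>\<bar>\<omega> u + \<phi>\<bar> < \<pi>/2\<close>, and \<open>M w = v w / (\<xi> - \<kappa> w)\<close>, convex and
  increasing where \<open>\<kappa> w < \<xi>\<close>.  The set \<open>U\<close> of points of the strip where the denominator is
  positive is open and relatively closed in the sublevel set defining \<open>K_set\<close>, so \<open>K_set\<close> is
  the component of \<open>0\<close> in \<open>U\<close>, a bounded interval.  At its endpoints the denominator
  vanishes while the numerator stays positive, so \<open>\<Xi>\<close> tends to infinity there, and a bounded
  convex function with this property has a derivative that blows up as well.\<close>

lemma cos_gt_zero_if_abs_less: "\<bar>y\<bar> < pi/2 \<Longrightarrow> 0 < cos y"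
  by (intro cos_gt_zero_pi) arith+

lemma cos_eq_zero_if_abs_eq: "\<bar>y\<bar> = pi/2 \<Longrightarrow> cos y = 0"
  by (metis abs_if cos_minus cos_pi_half minus_minus)

lemma mult_cos_le_sin:
  fixes z :: real
  assumes "0 \<le> z" "z \<le> pi"
  shows "z * cos z \<le> sin z"
proof -
  have "(\<lambda>x. sin x - x * cos x) 0 \<le> (\<lambda>x. sin x - x * cos x) z"
  proof (rule DERIV_nonneg_imp_increasing_open[OF assms(1)])
    fix x assume x: "0 < x" "x < z"
    have "((\<lambda>x. sin x - x * cos x) has_real_derivative x * sin x) (at x)"
      by (auto intro!: derivative_eq_intros simp: algebra_simps)
    moreover have "0 \<le> x * sin x"
      using x assms by (intro mult_nonneg_nonneg sin_ge_zero) auto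
    ultimately show "\<exists>y. ((\<lambda>x. sin x - x * cos x) has_real_derivative y) (at x) \<and> 0 \<le> y"
      by blast
  qed (intro continuous_intros)
  then show ?thesis by simp
qed

lemma mult_sin_pos:
  fixes x :: real
  assumes "x \<noteq> 0" "\<bar>x\<bar> < pi"
  shows "0 < x * sin x"
proof (cases "0 < x")
  case True
  then show ?thesis using assms by (intro mult_pos_pos sin_gt_zero) auto
next
  case False
  then have "0 < sin (-x)" using assms by (intro sin_gt_zero) auto
  then show ?thesis using False assms by (simp add: mult_neg_neg)
qed

lemma cos_add_mult_sin_pos_nonneg:
  fixes y \<phi> :: real
  assumes "0 \<le> y" "y < pi/2" "\<phi> < pi/2"
  shows "0 < cos y + (y - \<phi>) * sin y"
proof (cases "y = 0")
  case False
  then have sin_pos: "0 < sin y" using assms by (intro sin_gt_zero) auto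
  have "(pi/2 - y) * sin y \<le> cos y"
    using mult_cos_le_sin[of "pi/2 - y"] assms by (simp add: cos_diff sin_diff)
  moreover have "0 < (pi/2 - \<phi>) * sin y" using sin_pos assms by simp
  ultimately show ?thesis by (simp add: algebra_simps)
qed simp

lemma cos_add_mult_sin_pos:
  fixes y \<phi> :: real
  assumes "\<bar>y\<bar> < pi/2" "\<bar>\<phi>\<bar> < pi/2"
  shows "0 < cos y + (y - \<phi>) * sin y"
proof (cases "0 \<le> y")
  case True
  then show ?thesis using cos_add_mult_sin_pos_nonneg assms by auto
next
  case False
  have "0 < cos (-y) + (-y - (-\<phi>)) * sin (-y)"
    using False assms by (intro cos_add_mult_sin_pos_nonneg) auto
  then show ?thesis by (simp add: algebra_simps)
qed

lemma convex_on_mult_tan: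
  fixes a \<phi> :: real
  assumes "0 < a" "\<bar>\<phi>\<bar> < pi/2"
  shows "convex_on {u. \<bar>a * u + \<phi>\<bar> < pi/2} (\<lambda>u. cos \<phi> * u * tan (a * u + \<phi>) - sin \<phi> * u)"
proof (rule f''_ge0_imp_convex)
  have "{u. \<bar>a * u + \<phi>\<bar> < pi/2} = {(-(pi/2) - \<phi>)/a <..< (pi/2 - \<phi>)/a}"
    using assms unfolding abs_less_iff by (auto simp: field_simps)
  then show "convex {u. \<bar>a * u + \<phi>\<bar> < pi/2}" by simp
next
  fix u assume "u \<in> {u. \<bar>a * u + \<phi>\<bar> < pi/2}"
  then have y: "\<bar>a * u + \<phi>\<bar> < pi/2" by simp
  then have cos_pos: "0 < cos (a * u + \<phi>)" by (rule cos_gt_zero_if_abs_less)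
  then show "((\<lambda>u. cos \<phi> * u * tan (a * u + \<phi>) - sin \<phi> * u) has_real_derivative
      cos \<phi> * (tan (a * u + \<phi>) + a * u / (cos (a * u + \<phi>))\<^sup>2) - sin \<phi>) (at u)"
    by (auto intro!: derivative_eq_intros simp: field_simps power2_eq_square)
  show "((\<lambda>u. cos \<phi> * (tan (a * u + \<phi>) + a * u / (cos (a * u + \<phi>))\<^sup>2) - sin \<phi>) has_real_derivative
      2 * a * cos \<phi> * (cos (a * u + \<phi>) + a * u * sin (a * u + \<phi>)) / (cos (a * u + \<phi>))^3) (at u)"
    using cos_pos
    by (auto intro!: derivative_eq_intros simp: field_simps power2_eq_square power3_eq_cube)
  have "0 < cos (a * u + \<phi>) + ((a * u + \<phi>) - \<phi>) * sin (a * u + \<phi>)"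
    using y assms by (intro cos_add_mult_sin_pos)
  moreover have "0 < cos \<phi>" using assms(2) by (rule cos_gt_zero_if_abs_less)
  ultimately show "0 \<le> 2 * a * cos \<phi> * (cos (a * u + \<phi>) + a * u * sin (a * u + \<phi>)) / (cos (a * u + \<phi>))^3"
    using cos_pos assms by simp
qed

lemma convex_on_linear_fractional:
  fixes c \<xi> v :: real
  assumes "0 \<le> c" "0 \<le> \<xi>" "0 \<le> v"
  shows "convex_on {w. c * w < \<xi>} (\<lambda>w. v * w / (\<xi> - c * w))"
proof (rule f''_ge0_imp_convex)
  show "convex {w. c * w < \<xi>}"
    using convex_halfspace_lt[of c \<xi>] by (simp add: inner_real_def)
next
  fix w assume "w \<in> {w. c * w < \<xi>}"
  then have pos: "0 < \<xi> - c * w" by simp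
  then show "((\<lambda>w. v * w / (\<xi> - c * w)) has_real_derivative v * \<xi> / (\<xi> - c * w)\<^sup>2) (at w)"
    by (auto intro!: derivative_eq_intros simp: field_simps power2_eq_square)
  show "((\<lambda>w. v * \<xi> / (\<xi> - c * w)\<^sup>2) has_real_derivative 2 * v * \<xi> * c / (\<xi> - c * w)^3) (at w)"
    using pos by (auto intro!: derivative_eq_intros simp: divide_simps eval_nat_numeral)
  show "0 \<le> 2 * v * \<xi> * c / (\<xi> - c * w)^3"
    using pos assms by simp
qed

lemma mono_on_linear_fractional:
  fixes c \<xi> v :: real
  assumes "0 \<le> \<xi>" "0 \<le> v"
  shows "mono_on {w. c * w < \<xi>} (\<lambda>w. v * w / (\<xi> - c * w))"
proof (rule mono_onI)
  fix w1 w2 assume w: "w1 \<in> {w. c * w < \<xi>}" "w2 \<in> {w. c * w < \<xi>}" "w1 \<le> w2"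
  then have "w1 / (\<xi> - c * w1) \<le> w2 / (\<xi> - c * w2)"
    using assms by (simp add: divide_simps algebra_simps mult_left_mono)
  then show "v * w1 / (\<xi> - c * w1) \<le> v * w2 / (\<xi> - c * w2)"
    using assms by (simp add: mult_left_mono times_divide_eq_right[symmetric] del: times_divide_eq_right)
qed

lemma convex_on_compose_mono:
  fixes g :: "'a::real_vector \<Rightarrow> real"
  assumes g: "convex_on S g" and f: "convex_on U f" "mono_on U f" and "g ` S \<subseteq> U"
  shows "convex_on S (\<lambda>x. f (g x))"
proof (rule convex_onI[OF _ convex_on_imp_convex[OF g]])
  fix \<theta> :: real and x y assume \<theta>: "0 < \<theta>" "\<theta> < 1" and xy: "x \<in> S" "y \<in> S"
  let ?z = "(1 - \<theta>) *\<^sub>R x + \<theta> *\<^sub>R y"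
  have "?z \<in> S" using convexD[OF convex_on_imp_convex[OF g] xy, of "1 - \<theta>" \<theta>] \<theta> by simp
  then have gz: "g ?z \<in> U" using assms by auto
  have gxy: "g x \<in> U" "g y \<in> U" using xy assms by auto
  have comb: "(1 - \<theta>) * g x + \<theta> * g y \<in> U"
    using convexD[OF convex_on_imp_convex[OF f(1)] gxy, of "1 - \<theta>" \<theta>] \<theta> by simp
  have "f (g ?z) \<le> f ((1 - \<theta>) * g x + \<theta> * g y)"
    using convex_onD[OF g, of \<theta> x y] \<theta> xy by (intro mono_onD[OF f(2) gz comb]) simp
  also have "\<dots> \<le> (1 - \<theta>) * f (g x) + \<theta> * f (g y)"
    using convex_onD[OF f(1), of \<theta> "g x" "g y"] \<theta> gxy by simp
  finally show "f (g ?z) \<le> (1 - \<theta>) * f (g x) + \<theta> * f (g y)" .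
qed

lemma convex_on_cong:
  assumes "\<And>x. x \<in> S \<Longrightarrow> f x = g x"
  shows "convex_on S f \<longleftrightarrow> convex_on S g"
  using assms by (auto simp: convex_on_def convex_def)

lemma connected_component_set_clopen:
  assumes "openin (top_of_set S) T" "closedin (top_of_set S) T" "x \<in> T"
  shows "connected_component_set S x = connected_component_set T x"
proof
  show "connected_component_set T x \<subseteq> connected_component_set S x"
    using openin_imp_subset[OF assms(1)] by (rule connected_component_mono)
next
  let ?C = "connected_component_set S x"
  obtain G where "open G" "T = S \<inter> G"
    using assms(1) openin_open by blast
  obtain H where "closed H" "T = S \<inter> H"
    using assms(2) closedin_closed by blast
  have "?C \<subseteq> S" by (rule connected_component_subset)
  then have eqG: "?C \<inter> T = ?C \<inter> G" and eqH: "?C \<inter> T = ?C \<inter> H"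
    using \<open>T = S \<inter> G\<close> \<open>T = S \<inter> H\<close> by auto
  have "openin (top_of_set ?C) (?C \<inter> T)"
    unfolding eqG using \<open>open G\<close> by (rule openin_open_Int)
  moreover have "closedin (top_of_set ?C) (?C \<inter> T)"
    unfolding eqH using \<open>closed H\<close> by (rule closedin_closed_Int)
  ultimately have "?C \<inter> T = {} \<or> ?C \<inter> T = ?C"
    by (rule connected_clopen[THEN iffD1, OF connected_connected_component, rule_format, OF conjI])
  moreover have "x \<in> ?C" using assms(3) openin_imp_subset[OF assms(1)] by auto
  ultimately have "?C \<subseteq> T" using assms(3) by blast
  then show "?C \<subseteq> connected_component_set T x"
    using \<open>x \<in> ?C\<close> by (intro connected_component_maximal) auto
qed

lemma essentially_smooth_on_transform:
  assumes smooth: "essentially_smooth_on K f" and "open K" and eq: "\<And>x. x \<in> K \<Longrightarrow> f x = g x"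
  shows "essentially_smooth_on K g"
proof -
  have diff: "g differentiable (at u)" if "u \<in> K" for u
  proof -
    have "f differentiable (at u)"
      using smooth that unfolding essentially_smooth_on_def interior_open[OF \<open>open K\<close>] by blast
    then obtain D where "(f has_real_derivative D) (at u)"
      unfolding real_differentiable_def by blast
    then have "(g has_real_derivative D) (at u)"
      by (rule has_field_derivative_transform_within_open[OF _ \<open>open K\<close> that eq])
    then show ?thesis using real_differentiable_def by blast
  qed
  have deriv: "deriv f u = deriv g u" if "u \<in> K" for u
    using \<open>open K\<close> that eq
    by (intro deriv_cong_ev eventually_nhds_in_open[THEN eventually_mono]) auto
  show ?thesis
    using smooth diff deriv
    unfolding essentially_smooth_on_def interior_open[OF \<open>open K\<close>] by simp
qed

text \<open>The tangent at \<open>x\<close> lies below \<open>f\<close> at a fixed point \<open>p\<close>, so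
  \<open>f x - f p \<le> \<bar>f' x\<bar> \<cdot> diam K\<close>: a bounded convex function blowing up at the
  frontier has a derivative blowing up there.\<close>
lemma essentially_smooth_on_convex:
  fixes f :: "real \<Rightarrow> real"
  assumes "open K" "bounded K" "K \<noteq> {}" and conv: "convex_on K f"
    and diff: "\<And>u. u \<in> K \<Longrightarrow> f differentiable (at u)"
    and blowup: "\<And>x b. \<forall>n. x n \<in> K \<Longrightarrow> x \<longlonglongrightarrow> b \<Longrightarrow> b \<in> frontier K \<Longrightarrow>
      filterlim (\<lambda>n. f (x n)) at_top sequentially"
  shows "essentially_smooth_on K f"
  unfolding essentially_smooth_on_def interior_open[OF \<open>open K\<close>]
proof (intro conjI ballI allI impI)
  fix x :: "nat \<Rightarrow> real" and b
  assume x: "\<forall>n. x n \<in> K" and "x \<longlonglongrightarrow> b" "b \<in> frontier K"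
  obtain p where p: "p \<in> K" using \<open>K \<noteq> {}\<close> by blast
  obtain B where B: "0 < B" "\<And>u. u \<in> K \<Longrightarrow> \<bar>u\<bar> \<le> B"
    using \<open>bounded K\<close> by (auto simp: bounded_pos)
  have bound: "inverse (2 * B) * (- f p + f (x n)) \<le> \<bar>deriv f (x n)\<bar>" for n
  proof -
    have deriv: "(f has_real_derivative deriv f (x n)) (at (x n))"
      using diff x DERIV_deriv_iff_real_differentiable by blast
    have "f (x n) - f p \<le> deriv f (x n) * (x n - p)"
      using convex_on_imp_above_tangent[OF conv convex_connected[OF convex_on_imp_convex[OF conv]]
          _ p has_field_derivative_at_within[OF deriv]] x \<open>open K\<close>
      by (simp add: interior_open algebra_simps)
    also have "\<dots> \<le> \<bar>deriv f (x n)\<bar> * \<bar>x n - p\<bar>"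
      by (simp add: abs_mult[symmetric])
    also have "\<dots> \<le> \<bar>deriv f (x n)\<bar> * (2 * B)"
      using B(2)[of p] B(2)[of "x n"] p x by (intro mult_left_mono) auto
    finally show ?thesis using B by (simp add: field_simps)
  qed
  have lim: "filterlim (\<lambda>n. inverse (2 * B) * (- f p + f (x n))) at_top sequentially"
    using B by (intro filterlim_tendsto_pos_mult_at_top[OF tendsto_const]
        filterlim_tendsto_add_at_top[OF tendsto_const] blowup[OF x \<open>x \<longlonglongrightarrow> b\<close> \<open>b \<in> frontier K\<close>]) auto
  show "filterlim (\<lambda>n. \<bar>deriv f (x n)\<bar>) at_top sequentially"
    by (rule filterlim_at_top_mono[OF lim always_eventually]) (use bound in blast)
qed (use \<open>K \<noteq> {}\<close> diff in auto)

locale Xi_parameters =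
  fixes v \<xi> \<rho> t \<tau> :: real
  assumes v_pos: "0 < v" and xi_pos: "0 < \<xi>" and rho_bounds: "-1 < \<rho>" "\<rho> < 1"
    and t_nonneg: "0 \<le> t" and tau_pos: "0 < \<tau>"
begin

definition \<phi> :: real where "\<phi> = arcsin \<rho>"
definition \<omega> :: real where "\<omega> = \<xi> * rhobar \<rho> * \<tau> / 2"
definition \<kappa> :: real where "\<kappa> = \<xi>\<^sup>2 * t / 2"
definition den :: "real \<Rightarrow> real" where "den u = \<xi> * cos (\<omega> * u + \<phi>) - \<kappa> * u * sin (\<omega> * u)"
definition W :: "real \<Rightarrow> real" where "W u = cos \<phi> * u * tan (\<omega> * u + \<phi>) - sin \<phi> * u"
definition M :: "real \<Rightarrow> real" where "M w = v * w / (\<xi> - \<kappa> * w)"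
definition U :: "real set" where "U = {u. \<bar>\<omega> * u + \<phi>\<bar> < pi/2 \<and> 0 < den u}"
definition K :: "real set" where "K = connected_component_set U 0"

lemma phase: "\<bar>\<phi>\<bar> < pi/2" "sin \<phi> = \<rho>" "cos \<phi> = rhobar \<rho>"
  using rho_bounds arcsin_lt_bounded[of \<rho>]
  by (auto simp: \<phi>_def rhobar_def cos_arcsin)

lemma cos_phase_pos: "0 < cos \<phi>"
  using phase(1) by (rule cos_gt_zero_if_abs_less)

lemma omega_pos: "0 < \<omega>"
  using xi_pos tau_pos cos_phase_pos by (simp add: \<omega>_def phase(3)[symmetric])

lemma kappa_nonneg: "0 \<le> \<kappa>"
  using t_nonneg by (simp add: \<kappa>_def)

lemma abs_omega_mult_less_pi: "\<bar>\<omega> * u + \<phi>\<bar> \<le> pi/2 \<Longrightarrow> \<bar>\<omega> * u\<bar> < pi"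
  using phase(1) by linarith

lemma mult_sin_omega_pos:
  assumes "u \<noteq> 0" "\<bar>\<omega> * u + \<phi>\<bar> \<le> pi/2"
  shows "0 < u * sin (\<omega> * u)"
proof -
  have "0 < (\<omega> * u) * sin (\<omega> * u)"
    using assms omega_pos abs_omega_mult_less_pi by (intro mult_sin_pos) auto
  then show ?thesis using omega_pos by (simp add: zero_less_mult_iff mult.assoc)
qed

lemma omega_mult: "\<xi> * rhobar \<rho> * \<tau> * u / 2 = \<omega> * u"
  by (simp add: \<omega>_def)

lemma Xi_den_eq:
  assumes "sin (\<omega> * u) \<noteq> 0"
  shows "Xi_den \<xi> \<rho> u s \<tau> = (\<xi> * cos (\<omega> * u + \<phi>) - \<xi>\<^sup>2 * s / 2 * u * sin (\<omega> * u)) / sin (\<omega> * u)"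
proof -
  have "rhobar \<rho> * cot (\<omega> * u) - \<rho> = cos \<phi> * cos (\<omega> * u) / sin (\<omega> * u) - sin \<phi>"
    by (simp add: cot_def phase)
  also have "\<dots> = cos (\<omega> * u + \<phi>) / sin (\<omega> * u)"
    using assms by (simp add: cos_add field_simps)
  finally have cot_eq: "rhobar \<rho> * cot (\<omega> * u) - \<rho> = cos (\<omega> * u + \<phi>) / sin (\<omega> * u)" .
  show ?thesis
    unfolding Xi_den_def omega_mult cot_eq using assms by (simp add: field_simps)
qed

lemma Xi_eq:
  assumes "\<bar>\<omega> * u + \<phi>\<bar> \<le> pi/2"
  shows "Xi v \<xi> \<rho> u s \<tau> = v * u * sin (\<omega> * u) / (\<xi> * cos (\<omega> * u + \<phi>) - \<xi>\<^sup>2 * s / 2 * u * sin (\<omega> * u))"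
proof (cases "u = 0")
  case False
  then have "sin (\<omega> * u) \<noteq> 0" using mult_sin_omega_pos[OF _ assms] by fastforce
  then show ?thesis
    using False unfolding Xi_def Xi_den_eq[OF \<open>sin (\<omega> * u) \<noteq> 0\<close>]
    by (simp add: divide_divide_eq_right mult_ac)
qed (simp add: Xi_def)

lemma open_U: "open U"
  unfolding U_def den_def by (intro open_Collect_conj open_Collect_less continuous_intros)

lemma closure_U_subset: "closure U \<subseteq> {u. \<bar>\<omega> * u + \<phi>\<bar> \<le> pi/2 \<and> 0 \<le> den u}"
proof (rule closure_minimal)
  show "closed {u. \<bar>\<omega> * u + \<phi>\<bar> \<le> pi/2 \<and> 0 \<le> den u}"
    unfolding den_def by (intro closed_Collect_conj closed_Collect_le continuous_intros)
qed (auto simp: U_def)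

lemma zero_in_U: "0 \<in> U"
  using phase(1) cos_phase_pos xi_pos by (simp add: U_def den_def)

definition Xi_level :: "real set" where
  "Xi_level = {u. Xi_defined \<xi> \<rho> u 0 \<tau> \<and> (t = 0 \<or> Xi v \<xi> \<rho> u 0 \<tau> < 2 * v / (\<xi>\<^sup>2 * t))}"

lemma mem_Xi_level_iff:
  assumes strip: "\<bar>\<omega> * u + \<phi>\<bar> \<le> pi/2"
  shows "u \<in> Xi_level \<longleftrightarrow> u \<in> U"
proof (cases "u = 0")
  case True
  have "t = 0 \<or> 0 < 2 * v / (\<xi>\<^sup>2 * t)"
    using v_pos xi_pos t_nonneg by (cases "t = 0") (auto intro!: divide_pos_pos)
  then show ?thesis
    using True zero_in_U by (auto simp: Xi_level_def Xi_defined_def Xi_def)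
next
  case False
  then have sin_ne: "sin (\<omega> * u) \<noteq> 0" using mult_sin_omega_pos[OF _ strip] by fastforce
  show ?thesis
  proof (cases "\<bar>\<omega> * u + \<phi>\<bar> < pi/2")
    case False
    then have "cos (\<omega> * u + \<phi>) = 0" using strip by (intro cos_eq_zero_if_abs_eq) arith
    then have "\<not> Xi_defined \<xi> \<rho> u 0 \<tau>"
      using \<open>u \<noteq> 0\<close> by (simp add: Xi_defined_def Xi_den_eq[OF sin_ne])
    then show ?thesis using False by (simp add: Xi_level_def U_def)
  next
    case True
    then have cos_pos: "0 < cos (\<omega> * u + \<phi>)" by (rule cos_gt_zero_if_abs_less)
    have "Xi_defined \<xi> \<rho> u 0 \<tau>"
      using sin_ne cos_pos xi_pos by (simp add: Xi_defined_def omega_mult Xi_den_eq[OF sin_ne])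
    moreover have "(t = 0 \<or> Xi v \<xi> \<rho> u 0 \<tau> < 2 * v / (\<xi>\<^sup>2 * t)) \<longleftrightarrow> 0 < den u"
    proof (cases "t = 0")
      case False
      then have "0 < t" using t_nonneg by simp
      have "Xi v \<xi> \<rho> u 0 \<tau> = v * (u * sin (\<omega> * u)) / (\<xi> * cos (\<omega> * u + \<phi>))"
        using Xi_eq[OF strip, of 0] by simp
      also have "\<dots> < 2 * v / (\<xi>\<^sup>2 * t) \<longleftrightarrow>
          v * (u * sin (\<omega> * u) * (\<xi>\<^sup>2 * t)) < v * (2 * (\<xi> * cos (\<omega> * u + \<phi>)))"
        using \<open>0 < t\<close> cos_pos xi_pos by (simp add: divide_simps mult_ac)
      also have "\<dots> \<longleftrightarrow> \<kappa> * (u * sin (\<omega> * u)) < \<xi> * cos (\<omega> * u + \<phi>)"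
        using v_pos by (simp add: \<kappa>_def algebra_simps)
      finally show ?thesis using False by (simp add: den_def algebra_simps)
    next
      case True
      then have "\<kappa> = 0" unfolding \<kappa>_def by simp
      then have "0 < den u" unfolding den_def using cos_pos xi_pos by simp
      then show ?thesis using True by blast
    qed
    ultimately show ?thesis using True by (simp add: Xi_level_def U_def)
  qed
qed

lemma K_set_eq: "K_set v \<xi> \<rho> t \<tau> = K"
proof -
  have U_Xi_level: "U \<subseteq> Xi_level"
    using mem_Xi_level_iff by (auto simp: U_def)
  have "U = Xi_level \<inter> closure U"
    using U_Xi_level closure_subset closure_U_subset mem_Xi_level_iff by blast
  then have "closedin (top_of_set Xi_level) U"
    by (metis closedin_closed_Int closed_closure)
  then show ?thesis
    unfolding K_set_def K_def Xi_level_def[symmetric]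
    by (intro connected_component_set_clopen open_subset[OF U_Xi_level open_U] zero_in_U)
qed

lemma open_K: "open K"
  unfolding K_def using open_U by (rule open_connected_component)

lemma K_subset_U: "K \<subseteq> U"
  unfolding K_def by (rule connected_component_subset)

lemma zero_in_K: "0 \<in> K"
  unfolding K_def using zero_in_U by simp

lemma convex_K: "convex K"
  unfolding K_def using connected_convex_1 connected_connected_component by blast

lemma bounded_K: "bounded K"
proof (rule bounded_subset_ballI)
  show "K \<subseteq> ball 0 (pi / \<omega>)"
    using K_subset_U abs_omega_mult_less_pi omega_pos
    by (auto simp: U_def abs_mult field_simps)
qed

lemma cos_pos_of_mem_U: "u \<in> U \<Longrightarrow> 0 < cos (\<omega> * u + \<phi>)"
  by (simp add: U_def cos_gt_zero_if_abs_less)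

lemma W_eq:
  assumes "cos (\<omega> * u + \<phi>) \<noteq> 0"
  shows "W u = u * sin (\<omega> * u) / cos (\<omega> * u + \<phi>)"
proof -
  have "W u = u * (cos \<phi> * sin (\<omega> * u + \<phi>) - sin \<phi> * cos (\<omega> * u + \<phi>)) / cos (\<omega> * u + \<phi>)"
    using assms by (simp add: W_def tan_def field_simps)
  also have "cos \<phi> * sin (\<omega> * u + \<phi>) - sin \<phi> * cos (\<omega> * u + \<phi>) = sin (\<omega> * u)"
    using sin_diff[of "\<omega> * u + \<phi>" \<phi>] by (simp add: mult_ac)
  finally show ?thesis .
qed

lemma M_W_eq:
  assumes "u \<in> U"
  shows "\<kappa> * W u < \<xi>" "M (W u) = v * u * sin (\<omega> * u) / den u"
proof -
  have cos_pos: "0 < cos (\<omega> * u + \<phi>)"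
    using assms by (rule cos_pos_of_mem_U)
  have den_pos: "\<kappa> * (u * sin (\<omega> * u)) < \<xi> * cos (\<omega> * u + \<phi>)"
    using assms by (simp add: U_def den_def mult.assoc)
  show "\<kappa> * W u < \<xi>"
    using den_pos cos_pos by (simp add: W_eq pos_divide_less_eq)
  show "M (W u) = v * u * sin (\<omega> * u) / den u"
    using den_pos cos_pos by (simp add: M_def W_eq den_def field_simps)
qed

lemma Xi_eq_M_W: "u \<in> U \<Longrightarrow> Xi v \<xi> \<rho> u t \<tau> = M (W u)"
  using Xi_eq[of u t] by (simp add: M_W_eq U_def den_def \<kappa>_def)

lemma convex_on_M_W: "convex_on K (\<lambda>u. M (W u))"
proof (rule convex_on_compose_mono[where f = M and g = W])
  show "convex_on K W"
    unfolding W_def using K_subset_U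
    by (intro convex_on_subset[OF convex_on_mult_tan[OF omega_pos phase(1)] _ convex_K])
      (auto simp: U_def)
  show "convex_on {w. \<kappa> * w < \<xi>} M" "mono_on {w. \<kappa> * w < \<xi>} M"
    unfolding M_def using kappa_nonneg xi_pos v_pos
    by (auto intro!: convex_on_linear_fractional mono_on_linear_fractional)
  show "W ` K \<subseteq> {w. \<kappa> * w < \<xi>}"
    using K_subset_U M_W_eq(1) by auto
qed

lemma differentiable_M_W:
  assumes "u \<in> U"
  shows "(\<lambda>u. M (W u)) differentiable (at u)"
proof -
  have "cos (\<omega> * u + \<phi>) \<noteq> 0" "\<xi> - \<kappa> * W u \<noteq> 0"
    using cos_pos_of_mem_U[OF assms] M_W_eq(1)[OF assms] by auto
  then show ?thesis
    unfolding real_differentiable_def M_def W_def by (intro exI derivative_eq_intros refl) auto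
qed

lemma frontier_K:
  assumes "b \<in> frontier K"
  shows "\<bar>\<omega> * b + \<phi>\<bar> \<le> pi/2" "den b = 0" "b \<noteq> 0"
proof -
  have "b \<in> frontier U"
    using assms frontier_of_connected_component_subset unfolding K_def by blast
  then have "b \<in> closure U" "b \<notin> U"
    using open_U by (auto simp: frontier_def interior_open)
  then have strip: "\<bar>\<omega> * b + \<phi>\<bar> \<le> pi/2" and "0 \<le> den b"
    using closure_U_subset by auto
  then show "\<bar>\<omega> * b + \<phi>\<bar> \<le> pi/2" by simp
  have "den b \<le> 0"
  proof (cases "\<bar>\<omega> * b + \<phi>\<bar> < pi/2")
    case True
    then show ?thesis using \<open>b \<notin> U\<close> by (auto simp: U_def)
  next
    case False
    then have "cos (\<omega> * b + \<phi>) = 0" using strip by (intro cos_eq_zero_if_abs_eq) arith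
    moreover have "0 \<le> b * sin (\<omega> * b)"
      using mult_sin_omega_pos[OF _ strip] by (cases "b = 0") (auto intro: less_imp_le)
    ultimately show ?thesis using kappa_nonneg by (simp add: den_def mult.assoc)
  qed
  with \<open>0 \<le> den b\<close> show "den b = 0" by simp
  then show "b \<noteq> 0" using xi_pos cos_phase_pos by (auto simp: den_def)
qed

lemma M_W_at_top_frontier:
  assumes x: "\<forall>n. x n \<in> K" and "x \<longlonglongrightarrow> b" and b: "b \<in> frontier K"
  shows "filterlim (\<lambda>n. M (W (x n))) at_top sequentially"
proof -
  have num: "(\<lambda>n. v * x n * sin (\<omega> * x n)) \<longlonglongrightarrow> v * b * sin (\<omega> * b)"
    by (intro tendsto_intros \<open>x \<longlonglongrightarrow> b\<close>)
  have num_pos: "0 < v * b * sin (\<omega> * b)"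
    using mult_sin_omega_pos[OF frontier_K(3,1)[OF b]] v_pos by (simp add: mult.assoc)
  have "(\<lambda>n. den (x n)) \<longlonglongrightarrow> den b"
    unfolding den_def by (intro tendsto_intros \<open>x \<longlonglongrightarrow> b\<close>)
  then have den_lim: "(\<lambda>n. den (x n)) \<longlonglongrightarrow> 0"
    using frontier_K(2)[OF b] by simp
  have "eventually (\<lambda>n. 0 < den (x n)) sequentially"
    using x K_subset_U by (intro always_eventually) (auto simp: U_def)
  then have "filterlim (\<lambda>n. v * x n * sin (\<omega> * x n) * inverse (den (x n))) at_top sequentially"
    by (rule filterlim_tendsto_pos_mult_at_top[OF num num_pos filterlim_inverse_at_top[OF den_lim]])
  moreover have "M (W (x n)) = v * x n * sin (\<omega> * x n) * inverse (den (x n))" for n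
    using x K_subset_U M_W_eq(2) by (auto simp: divide_inverse)
  ultimately show ?thesis by simp
qed

lemma essentially_smooth_on_M_W: "essentially_smooth_on K (\<lambda>u. M (W u))"
  using open_K bounded_K zero_in_K convex_on_M_W differentiable_M_W K_subset_U M_W_at_top_frontier
  by (intro essentially_smooth_on_convex) auto

end

theorem lemma5p8:
  fixes v \<xi> \<rho> t \<tau> :: real
  assumes "v > 0" and "\<xi> > 0" and "-1 < \<rho>" and "\<rho> < 1"
    and "t \<ge> 0" and "\<tau> > 0"
  shows "convex_on (K_set v \<xi> \<rho> t \<tau>) (\<lambda>u. Xi v \<xi> \<rho> u t \<tau>)
    \<and> essentially_smooth_on (K_set v \<xi> \<rho> t \<tau>) (\<lambda>u. Xi v \<xi> \<rho> u t \<tau>)"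
proof -
  interpret Xi_parameters v \<xi> \<rho> t \<tau>
    using assms by unfold_locales
  have Xi_eq_on_K: "\<And>u. u \<in> K \<Longrightarrow> M (W u) = Xi v \<xi> \<rho> u t \<tau>"
    using Xi_eq_M_W K_subset_U by auto
  show ?thesis
    unfolding K_set_eq
    using convex_on_M_W convex_on_cong[of K "\<lambda>u. M (W u)", OF Xi_eq_on_K]
      essentially_smooth_on_transform[OF essentially_smooth_on_M_W open_K Xi_eq_on_K]
    by simp
qed

end
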